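(* Let $p$ be an odd prime and let $(G,H,T)$ be the envelope of a right conjugacy closed loop of order $2p$. Let $K$ be a subgroup with $H\lneq K\lneq G$, $|G:K|=2$ and $|K:H|=p$, and put $K_1=\langle T\cap K\rangle$, $H_1=H\cap K_1$. Assume $H\ne1$ and $[s,K_1]=1$ for all $s\in T\setminus K$. Then $H_1=1$, $K_1\le Z(G)$, and $G\cong C_p\wr C_2$.
   Context: For a finite loop $\mathcal{L}$ with identity $e$: $G=\langle R_a\mid a\in\mathcal L\rangle$ with $R_a\colon x\mapsto xa$, $H$ the stabilizer of $e$ in $G$, $T=\{R_a\}$; $(G,H,T)$ is the envelope; the loop is right conjugacy closed if $T$ is a union of conjugacy classes of $G$. *)

theory Defs
  imports "HOL-Algebra.Algebra"
begin

definition loop :: "'a set \<Rightarrow> ('a \<Rightarrow> 'a \<Rightarrow> 'a) \<Rightarrow> 'a \<Rightarrow> bool" where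
  "loop L m e \<longleftrightarrow> e \<in> L \<and> (\<forall>x\<in>L. \<forall>y\<in>L. m x y \<in> L)
     \<and> (\<forall>x\<in>L. m e x = x \<and> m x e = x)
     \<and> (\<forall>a\<in>L. \<forall>b\<in>L. \<exists>!x. x \<in> L \<and> m a x = b)
     \<and> (\<forall>a\<in>L. \<forall>b\<in>L. \<exists>!y. y \<in> L \<and> m y a = b)"

definition rmult :: "'a set \<Rightarrow> ('a \<Rightarrow> 'a \<Rightarrow> 'a) \<Rightarrow> 'a \<Rightarrow> ('a \<Rightarrow> 'a)" where
  "rmult L m a = (\<lambda>x\<in>L. m x a)"

definition rmults :: "'a set \<Rightarrow> ('a \<Rightarrow> 'a \<Rightarrow> 'a) \<Rightarrow> ('a \<Rightarrow> 'a) set" where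
  "rmults L m = rmult L m ` L"

definition rmlt_group :: "'a set \<Rightarrow> ('a \<Rightarrow> 'a \<Rightarrow> 'a) \<Rightarrow> ('a \<Rightarrow> 'a) monoid" where
  "rmlt_group L m = (BijGroup L)\<lparr>carrier := generate (BijGroup L) (rmults L m)\<rparr>"

definition env_stab :: "'a set \<Rightarrow> ('a \<Rightarrow> 'a \<Rightarrow> 'a) \<Rightarrow> 'a \<Rightarrow> ('a \<Rightarrow> 'a) set" where
  "env_stab L m e = {g \<in> carrier (rmlt_group L m). g e = e}"

definition rcc_loop :: "'a set \<Rightarrow> ('a \<Rightarrow> 'a \<Rightarrow> 'a) \<Rightarrow> 'a \<Rightarrow> bool" where
  "rcc_loop L m e \<longleftrightarrow> loop L m e \<and>
     (\<forall>g\<in>carrier (rmlt_group L m). \<forall>t\<in>rmults L m.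
        g \<otimes>\<^bsub>rmlt_group L m\<^esub> t \<otimes>\<^bsub>rmlt_group L m\<^esub> inv\<^bsub>rmlt_group L m\<^esub> g \<in> rmults L m)"

definition group_center :: "('g, 'b) monoid_scheme \<Rightarrow> 'g set" where
  "group_center G = {z \<in> carrier G. \<forall>g\<in>carrier G. z \<otimes>\<^bsub>G\<^esub> g = g \<otimes>\<^bsub>G\<^esub> z}"

text \<open>The wreath product C_p wr C_2 = (C_p x C_p) semidirect C_2, C_2 swapping the coordinates:
  (v,s)(w,t) = (v + s.w, s+t).\<close>
definition wreath_mult :: "nat \<Rightarrow> (nat \<times> nat) \<times> bool \<Rightarrow> (nat \<times> nat) \<times> bool \<Rightarrow> (nat \<times> nat) \<times> bool" where
  "wreath_mult p x y =
     (let w = (if snd x then prod.swap (fst y) else fst y)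
      in (((fst (fst x) + fst w) mod p, (snd (fst x) + snd w) mod p), snd x \<noteq> snd y))"

definition wreath_Cp_C2 :: "nat \<Rightarrow> ((nat \<times> nat) \<times> bool) monoid" where
  "wreath_Cp_C2 p =
     \<lparr>carrier = ({0..<p} \<times> {0..<p}) \<times> (UNIV :: bool set),
      monoid.mult = wreath_mult p,
      one = ((0, 0), False)\<rparr>"

end

(*
  The K-orbit B of e is a block of size p for G, with complement L - B.  An element of
  K1 = <R_a | a in B> fixing e commutes with every R_x, x outside B, and every point of B is
  R_y (R_b e) with b, y outside B; so K1 acts semiregularly, |K1| = |B| = p, and K1 is cyclic.
  Hence K1 commutes with all of T, i.e. it is central.  With t a generator of K1 and b outside B,
  the points of L are t^i e and t^i b (i < p), and g in G is determined by whether it swaps the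
  two blocks and by the rotations it induces on them.  This is an injective homomorphism into
  C_p wr C_2; it is onto because a nontrivial element of H fixes e and rotates the block of b.
*)
theory Submission
  imports Defs
begin

lemma exists_mult_mod_eq:
  fixes p d c :: nat
  assumes "Factorial_Ring.prime p" and "\<not> p dvd d"
  shows "\<exists>j. j * d mod p = c mod p"
proof -
  have "coprime d p"
    using prime_imp_coprime[OF assms] by (simp add: coprime_commute)
  hence "gcd d p = 1" by simp
  moreover have "d \<noteq> 0" using assms(2) by (intro notI) simp
  ultimately obtain x y where xy: "d * x = p * y + 1"
    using bezout_nat[of d p] by auto
  have "c * x * d = c * (d * x)" by (simp only: ac_simps)
  also have "\<dots> = c + p * (c * y)" unfolding xy by (simp add: algebra_simps)
  finally have "c * x * d mod p = c mod p" by simp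
  thus ?thesis by blast
qed

lemma card_image_eq_if_same_fibres:
  assumes fibres: "\<And>x y. x \<in> A \<Longrightarrow> y \<in> A \<Longrightarrow> f x = f y \<longleftrightarrow> g x = g y"
  shows "card (f ` A) = card (g ` A)"
proof -
  define h where "h = g \<circ> inv_into A f"
  have h: "h (f x) = g x" if "x \<in> A" for x
  proof -
    have "inv_into A f (f x) \<in> A" "f (inv_into A f (f x)) = f x"
      using that by (auto intro: inv_into_into f_inv_into_f)
    thus ?thesis using fibres that unfolding h_def by simp
  qed
  have "inj_on h (f ` A)"
    by (rule inj_onI) (auto simp: h fibres)
  moreover have "h ` f ` A = g ` A"
    using h by (simp add: image_image cong: image_cong)
  ultimately show ?thesis by (metis card_image)
qed

lemma group_center_commutes: "z \<in> group_center G \<Longrightarrow> g \<in> carrier G \<Longrightarrow> z \<otimes>\<^bsub>G\<^esub> g = g \<otimes>\<^bsub>G\<^esub> z"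
  by (simp add: group_center_def)

lemma (in group) center_if_commutes_with_generators:
  assumes gen: "carrier G = generate G S" and S: "S \<subseteq> carrier G" and z: "z \<in> carrier G"
    and comm: "\<And>s. s \<in> S \<Longrightarrow> s \<otimes> z = z \<otimes> s"
  shows "z \<in> group_center G"
proof -
  let ?C = "{g \<in> carrier G. g \<otimes> z = z \<otimes> g}"
  have "subgroup ?C G"
  proof (rule subgroupI)
    show "?C \<subseteq> carrier G" by blast
    have "\<one> \<in> ?C" using z by simp
    thus "?C \<noteq> {}" by blast
  next
    fix g assume "g \<in> ?C"
    hence g: "g \<in> carrier G" "g \<otimes> z = z \<otimes> g" by auto
    have "inv g \<otimes> z = inv g \<otimes> (z \<otimes> g) \<otimes> inv g" using g(1) z by (simp add: m_assoc)
    also have "\<dots> = inv g \<otimes> (g \<otimes> z) \<otimes> inv g" using g(2) by simp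
    also have "\<dots> = z \<otimes> inv g" using g(1) z by (simp add: m_assoc[symmetric])
    finally show "inv g \<in> ?C" using g by simp
  next
    fix g h assume "g \<in> ?C" "h \<in> ?C"
    hence g: "g \<in> carrier G" "g \<otimes> z = z \<otimes> g" and h: "h \<in> carrier G" "h \<otimes> z = z \<otimes> h"
      by auto
    have "g \<otimes> h \<otimes> z = g \<otimes> (z \<otimes> h)" using g h z by (simp add: m_assoc)
    also have "\<dots> = z \<otimes> (g \<otimes> h)" using g h z by (simp add: m_assoc[symmetric])
    finally show "g \<otimes> h \<in> ?C" using g h by simp
  qed
  moreover have "S \<subseteq> ?C" using S comm by blast
  ultimately have "carrier G \<subseteq> ?C" unfolding gen by (rule generate_subgroup_incl[rotated])
  thus ?thesis using z unfolding group_center_def by auto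
qed

lemma (in group) generate_eq_subgroup_of_prime_card:
  assumes S: "subgroup S G" and p: "Factorial_Ring.prime (card S)" and t: "t \<in> S" "t \<noteq> \<one>"
  shows "generate G {t} = S"
proof -
  have "finite S"
  proof (rule ccontr)
    assume "infinite S"
    with p show False by simp
  qed
  have tG: "t \<in> carrier G" using S t(1) subgroup.subset by blast
  have sub: "generate G {t} \<subseteq> S" using generate_subgroup_incl S t(1) by blast
  have "subgroup (generate G {t}) (G\<lparr>carrier := S\<rparr>)"
    using subgroup_incl[OF generate_is_subgroup S sub] tG by blast
  hence "card (rcosets\<^bsub>G\<lparr>carrier := S\<rparr>\<^esub> generate G {t}) * card (generate G {t}) = card S"
    using group.lagrange[OF subgroup.subgroup_is_group[OF S is_group]] by (simp add: order_def)
  hence "card S = card (generate G {t}) * card (rcosets\<^bsub>G\<lparr>carrier := S\<rparr>\<^esub> generate G {t})"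
    by (simp add: mult.commute)
  hence "card (generate G {t}) dvd card S" by (rule dvdI)
  moreover have "card (generate G {t}) \<noteq> 1"
  proof
    assume "card (generate G {t}) = 1"
    then obtain x where "generate G {t} = {x}" by (rule card_1_singletonE)
    moreover have "t \<in> generate G {t}" "\<one> \<in> generate G {t}"
      by (auto intro: generate.incl generate.one)
    ultimately show False using t(2) by auto
  qed
  ultimately have "card (generate G {t}) = card S" using p unfolding prime_nat_iff by blast
  thus ?thesis using card_subset_eq[OF \<open>finite S\<close> sub] by blast
qed

lemma (in group) subgroup_mult_left_iff:
  assumes "subgroup K G" "k \<in> K" "g \<in> carrier G"
  shows "k \<otimes> g \<in> K \<longleftrightarrow> g \<in> K"
proof
  assume "k \<otimes> g \<in> K"
  hence "inv k \<otimes> (k \<otimes> g) \<in> K"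
    using subgroup.m_closed[OF assms(1) subgroup.m_inv_closed[OF assms(1,2)]] by blast
  moreover have "inv k \<otimes> (k \<otimes> g) = g"
    using assms(3) subgroup.mem_carrier[OF assms(1,2)] by (simp add: m_assoc[symmetric])
  ultimately show "g \<in> K" by simp
qed (use assms in \<open>simp add: subgroup.m_closed\<close>)

lemma (in group) subgroup_mult_right_iff:
  assumes "subgroup K G" "k \<in> K" "g \<in> carrier G"
  shows "g \<otimes> k \<in> K \<longleftrightarrow> g \<in> K"
proof
  assume "g \<otimes> k \<in> K"
  hence "g \<otimes> k \<otimes> inv k \<in> K"
    using subgroup.m_closed[OF assms(1) _ subgroup.m_inv_closed[OF assms(1,2)]] by blast
  moreover have "g \<otimes> k \<otimes> inv k = g"
    using assms(3) subgroup.mem_carrier[OF assms(1,2)] by (simp add: m_assoc)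
  ultimately show "g \<in> K" by simp
qed (use assms in \<open>simp add: subgroup.m_closed\<close>)

section \<open>The wreath product C_p wr C_2 acting on two copies of Z_p\<close>

definition wreath_act :: "nat \<Rightarrow> (nat \<times> nat) \<times> bool \<Rightarrow> nat \<times> bool \<Rightarrow> nat \<times> bool" where
  "wreath_act p w c =
     (let s = (snd w \<noteq> snd c) in ((fst c + (if s then snd (fst w) else fst (fst w))) mod p, s))"

lemma carrier_wreath: "carrier (wreath_Cp_C2 p) = ({..<p} \<times> {..<p}) \<times> UNIV"
  by (auto simp: wreath_Cp_C2_def)

lemma mult_wreath: "x \<otimes>\<^bsub>wreath_Cp_C2 p\<^esub> y = wreath_mult p x y"
  by (simp add: wreath_Cp_C2_def)

lemma wreath_mult_closed:
  "0 < p \<Longrightarrow> wreath_mult p w w' \<in> carrier (wreath_Cp_C2 p)"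
  by (simp add: carrier_wreath wreath_mult_def Let_def)

lemma wreath_act_closed: "0 < p \<Longrightarrow> wreath_act p w c \<in> {..<p} \<times> UNIV"
  by (simp add: wreath_act_def Let_def)

lemma wreath_act_mult:
  "wreath_act p (wreath_mult p w w') c = wreath_act p w (wreath_act p w' c)"
proof -
  obtain a b s where w: "w = ((a, b), s)" by (metis prod.collapse)
  obtain a' b' s' where w': "w' = ((a', b'), s')" by (metis prod.collapse)
  obtain i r where c: "c = (i, r)" by (metis prod.collapse)
  show ?thesis unfolding w w' c wreath_act_def wreath_mult_def Let_def
    by (cases s; cases s'; cases r) (simp_all add: mod_add_left_eq mod_add_right_eq add_ac)
qed

lemma wreath_eq_if_act_eq:
  assumes "w \<in> carrier (wreath_Cp_C2 p)" "w' \<in> carrier (wreath_Cp_C2 p)"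
    and "wreath_act p w (0, False) = wreath_act p w' (0, False)"
    and "wreath_act p w (0, True) = wreath_act p w' (0, True)"
  shows "w = w'"
proof -
  obtain a b s where w: "w = ((a, b), s)" by (metis prod.collapse)
  obtain a' b' s' where w': "w' = ((a', b'), s')" by (metis prod.collapse)
  show ?thesis using assms unfolding w w' carrier_wreath wreath_act_def Let_def
    by (cases s; cases s') simp_all
qed

section \<open>Right multiplication groups of loops\<close>

lemma loop_mult_closed: "loop L m e \<Longrightarrow> x \<in> L \<Longrightarrow> y \<in> L \<Longrightarrow> m x y \<in> L"
  by (simp add: loop_def)

lemma loop_right_division:
  "loop L m e \<Longrightarrow> a \<in> L \<Longrightarrow> b \<in> L \<Longrightarrow> \<exists>!y. y \<in> L \<and> m y a = b"
  by (simp add: loop_def)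

lemma loop_left_division: "loop L m e \<Longrightarrow> a \<in> L \<Longrightarrow> b \<in> L \<Longrightarrow> \<exists>x \<in> L. m a x = b"
  by (simp add: loop_def) blast

lemma rmult_in_Bij:
  assumes "loop L m e" and "a \<in> L"
  shows "rmult L m a \<in> Bij L"
proof -
  note closed = loop_mult_closed[OF assms(1) _ assms(2)]
  note div = loop_right_division[OF assms]
  have "inj_on (\<lambda>x. m x a) L"
  proof (rule inj_onI)
    fix x y assume "x \<in> L" "y \<in> L" "m x a = m y a"
    obtain z where "\<forall>w. w \<in> L \<and> m w a = m x a \<longrightarrow> w = z"
      using div[OF closed[OF \<open>x \<in> L\<close>]] by (elim ex1E) blast
    thus "x = y" using \<open>x \<in> L\<close> \<open>y \<in> L\<close> \<open>m x a = m y a\<close> by metis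
  qed
  moreover have "(\<lambda>x. m x a) ` L = L"
  proof
    show "(\<lambda>x. m x a) ` L \<subseteq> L" using closed by blast
    show "L \<subseteq> (\<lambda>x. m x a) ` L"
    proof
      fix b assume "b \<in> L"
      then obtain x where "x \<in> L" "m x a = b" using ex1_implies_ex[OF div] by blast
      thus "b \<in> (\<lambda>x. m x a) ` L" by blast
    qed
  qed
  ultimately have "bij_betw (rmult L m a) L L"
    unfolding rmult_def bij_betw_def by (simp add: inj_on_def)
  thus ?thesis unfolding Bij_def rmult_def by simp
qed

locale loop_envelope =
  fixes L :: "'a set" and m :: "'a \<Rightarrow> 'a \<Rightarrow> 'a" and e :: 'a
  assumes loop: "loop L m e"
begin

abbreviation "G \<equiv> rmlt_group L m"
abbreviation "H \<equiv> env_stab L m e"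
abbreviation "T \<equiv> rmults L m"
abbreviation "R \<equiv> rmult L m"

lemma e_in_L: "e \<in> L"
  using loop by (simp add: loop_def)

lemma rmult_apply: "x \<in> L \<Longrightarrow> R a x = m x a"
  unfolding rmult_def by simp

lemma rmult_e: "a \<in> L \<Longrightarrow> R a e = a"
  using loop e_in_L by (simp add: loop_def rmult_def)

lemma T_subset_Bij: "T \<subseteq> Bij L"
  using rmult_in_Bij[OF loop] unfolding rmults_def by blast

lemma carrier_G: "carrier G = generate (BijGroup L) T"
  by (simp add: rmlt_group_def)

lemma subgroup_carrier_G: "subgroup (carrier G) (BijGroup L)"
  unfolding carrier_G
  by (rule group.generate_is_subgroup[OF group_BijGroup]) (simp add: BijGroup_def T_subset_Bij)

lemma G_eq: "G = (BijGroup L)\<lparr>carrier := carrier G\<rparr>"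
  by (simp add: rmlt_group_def)

lemma group_G: "group G"
  by (subst G_eq) (rule subgroup.subgroup_is_group[OF subgroup_carrier_G group_BijGroup])

sublocale Gr: group G
  by (rule group_G)

lemma carrier_G_subset_Bij: "carrier G \<subseteq> Bij L"
  using subgroup.subset[OF subgroup_carrier_G] by (simp add: BijGroup_def)

lemma T_subset_carrier: "T \<subseteq> carrier G"
  unfolding carrier_G by (blast intro: generate.incl)

lemma rmult_in_carrier: "a \<in> L \<Longrightarrow> R a \<in> carrier G"
  using T_subset_carrier unfolding rmults_def by blast

lemma carrier_G_generate: "carrier G = generate G T"
  using group.generate_consistent[OF group_BijGroup T_subset_carrier subgroup_carrier_G]
  by (simp add: rmlt_group_def)

lemma mult_apply:
  assumes "g \<in> carrier G" "h \<in> carrier G" "x \<in> L"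
  shows "(g \<otimes>\<^bsub>G\<^esub> h) x = g (h x)"
proof -
  have "g \<in> Bij L" "h \<in> Bij L" using assms(1,2) carrier_G_subset_Bij by blast+
  moreover have "g \<otimes>\<^bsub>G\<^esub> h = g \<otimes>\<^bsub>BijGroup L\<^esub> h" by (simp add: rmlt_group_def)
  ultimately show ?thesis using assms(3) by (simp add: BijGroup_def compose_def)
qed

lemma one_apply: "x \<in> L \<Longrightarrow> \<one>\<^bsub>G\<^esub> x = x"
  by (simp add: rmlt_group_def BijGroup_def)

lemma perm_closed: "g \<in> carrier G \<Longrightarrow> x \<in> L \<Longrightarrow> g x \<in> L"
  using carrier_G_subset_Bij unfolding Bij_def bij_betw_def by blast

lemma perm_inj: "g \<in> carrier G \<Longrightarrow> inj_on g L"
  using carrier_G_subset_Bij unfolding Bij_def bij_betw_def by blast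

lemma perm_eqI:
  assumes "g \<in> carrier G" "h \<in> carrier G" "\<And>x. x \<in> L \<Longrightarrow> g x = h x"
  shows "g = h"
proof (rule extensionalityI)
  show "g \<in> extensional L" "h \<in> extensional L"
    using assms(1,2) carrier_G_subset_Bij unfolding Bij_def by blast+
qed (rule assms(3))

lemma inv_apply: "g \<in> carrier G \<Longrightarrow> x \<in> L \<Longrightarrow> (inv\<^bsub>G\<^esub> g) (g x) = x"
  using mult_apply[of "inv\<^bsub>G\<^esub> g" g x] by (simp add: one_apply)

lemma apply_inv: "g \<in> carrier G \<Longrightarrow> x \<in> L \<Longrightarrow> g ((inv\<^bsub>G\<^esub> g) x) = x"
  using mult_apply[of g "inv\<^bsub>G\<^esub> g" x] by (simp add: one_apply)

lemma mem_stab_iff: "h \<in> H \<longleftrightarrow> h \<in> carrier G \<and> h e = e"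
  by (simp add: env_stab_def)

lemma stab_subgroup: "subgroup H G"
proof (rule Gr.subgroupI)
  show "H \<subseteq> carrier G" by (auto simp: mem_stab_iff)
  have "\<one>\<^bsub>G\<^esub> \<in> H" by (simp add: mem_stab_iff one_apply e_in_L)
  thus "H \<noteq> {}" by blast
next
  fix h assume "h \<in> H"
  thus "inv\<^bsub>G\<^esub> h \<in> H" using inv_apply[of h e] e_in_L by (simp add: mem_stab_iff)
next
  fix g h assume "g \<in> H" "h \<in> H"
  thus "g \<otimes>\<^bsub>G\<^esub> h \<in> H" by (simp add: mem_stab_iff mult_apply e_in_L)
qed

lemma G_transitive:
  assumes "x \<in> L" "y \<in> L"
  shows "\<exists>g \<in> carrier G. g x = y"
proof
  let ?g = "R y \<otimes>\<^bsub>G\<^esub> inv\<^bsub>G\<^esub> R x"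
  show "?g \<in> carrier G" using assms by (simp add: rmult_in_carrier)
  have "(inv\<^bsub>G\<^esub> R x) x = e"
    using inv_apply[OF rmult_in_carrier[OF assms(1)] e_in_L] assms(1) by (simp add: rmult_e)
  thus "?g x = y" using assms by (simp add: mult_apply rmult_in_carrier rmult_e)
qed

lemma central_fixing_point_eq_one:
  assumes z: "z \<in> group_center G" and x: "x \<in> L" "z x = x"
  shows "z = \<one>\<^bsub>G\<^esub>"
proof (rule perm_eqI)
  show zG: "z \<in> carrier G" using z by (simp add: group_center_def)
  fix y assume "y \<in> L"
  then obtain g where g: "g \<in> carrier G" "g x = y" using G_transitive x(1) by blast
  have "z y = (z \<otimes>\<^bsub>G\<^esub> g) x" using g zG x(1) by (simp add: mult_apply)
  also have "\<dots> = (g \<otimes>\<^bsub>G\<^esub> z) x" using group_center_commutes[OF z g(1)] by simp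
  also have "\<dots> = y" using g zG x by (simp add: mult_apply)
  finally show "z y = \<one>\<^bsub>G\<^esub> y" using \<open>y \<in> L\<close> by (simp add: one_apply)
qed simp

end

section \<open>The block of e under an intermediate subgroup K\<close>

locale envelope_block = loop_envelope +
  fixes K :: "('a \<Rightarrow> 'a) set"
  assumes K_subgroup: "subgroup K G"
    and stab_subset_K: "H \<subseteq> K"
    and K_proper: "K \<noteq> carrier G"
    and commutes: "\<forall>s \<in> T - K. \<forall>k \<in> generate G (T \<inter> K). s \<otimes>\<^bsub>G\<^esub> k = k \<otimes>\<^bsub>G\<^esub> s"
begin

abbreviation "K1 \<equiv> generate G (T \<inter> K)"

definition block :: "'a set" where
  "block = (\<lambda>k. k e) ` K"

lemma K_subset_carrier: "K \<subseteq> carrier G"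
  using subgroup.subset[OF K_subgroup] .

lemma e_in_block: "e \<in> block"
  using subgroup.one_closed[OF K_subgroup] e_in_L one_apply
  unfolding block_def by (metis image_eqI)

lemma block_subset_L: "block \<subseteq> L"
  unfolding block_def using K_subset_carrier perm_closed e_in_L by blast

lemma mem_K_iff:
  assumes g: "g \<in> carrier G"
  shows "g \<in> K \<longleftrightarrow> g e \<in> block"
proof
  assume "g e \<in> block"
  then obtain k where k: "k \<in> K" "g e = k e" unfolding block_def by blast
  have kG: "k \<in> carrier G" using k(1) K_subset_carrier by blast
  have "inv\<^bsub>G\<^esub> k \<otimes>\<^bsub>G\<^esub> g \<in> H"
    using g kG k(2) e_in_L by (simp add: mem_stab_iff mult_apply inv_apply)
  hence "inv\<^bsub>G\<^esub> k \<otimes>\<^bsub>G\<^esub> g \<in> K" using stab_subset_K by blast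
  thus "g \<in> K"
    using Gr.subgroup_mult_left_iff[OF K_subgroup subgroup.m_inv_closed[OF K_subgroup k(1)] g]
    by blast
qed (auto simp: block_def)

lemma apply_eq_mult_rmult: "g \<in> carrier G \<Longrightarrow> x \<in> L \<Longrightarrow> g x = (g \<otimes>\<^bsub>G\<^esub> R x) e"
  by (simp add: mult_apply rmult_in_carrier rmult_e e_in_L)

lemma rmult_mem_K_iff: "a \<in> L \<Longrightarrow> R a \<in> K \<longleftrightarrow> a \<in> block"
  using mem_K_iff[OF rmult_in_carrier] by (simp add: rmult_e)

lemma K_apply_mem_block_iff:
  assumes "k \<in> K" "x \<in> L"
  shows "k x \<in> block \<longleftrightarrow> x \<in> block"
proof -
  have kG: "k \<in> carrier G" using assms(1) K_subset_carrier by blast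
  have "k x \<in> block \<longleftrightarrow> k \<otimes>\<^bsub>G\<^esub> R x \<in> K"
    using apply_eq_mult_rmult[OF kG assms(2)] mem_K_iff[of "k \<otimes>\<^bsub>G\<^esub> R x"] kG assms(2)
    by (simp add: rmult_in_carrier)
  also have "\<dots> \<longleftrightarrow> x \<in> block"
    using Gr.subgroup_mult_left_iff[OF K_subgroup assms(1) rmult_in_carrier] assms(2)
    by (simp add: rmult_mem_K_iff)
  finally show ?thesis .
qed

lemma apply_block_mem_block_iff:
  assumes "g \<in> carrier G" "x \<in> block"
  shows "g x \<in> block \<longleftrightarrow> g \<in> K"
proof -
  have x: "x \<in> L" "R x \<in> K" using assms(2) block_subset_L rmult_mem_K_iff by auto
  have "g x \<in> block \<longleftrightarrow> g \<otimes>\<^bsub>G\<^esub> R x \<in> K"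
    using apply_eq_mult_rmult[OF assms(1) x(1)] mem_K_iff[of "g \<otimes>\<^bsub>G\<^esub> R x"] assms(1) x(1)
    by (simp add: rmult_in_carrier)
  also have "\<dots> \<longleftrightarrow> g \<in> K"
    using Gr.subgroup_mult_right_iff[OF K_subgroup x(2) assms(1)] .
  finally show ?thesis .
qed

lemma exists_not_in_block: "\<exists>b \<in> L. b \<notin> block"
proof (rule ccontr)
  assume "\<not> ?thesis"
  hence "T \<subseteq> K" using rmult_mem_K_iff unfolding rmults_def by blast
  hence "carrier G \<subseteq> K"
    unfolding carrier_G_generate by (rule Gr.generate_subgroup_incl[OF _ K_subgroup])
  thus False using K_proper K_subset_carrier by blast
qed

lemma K1_subgroup: "subgroup K1 G"
  using Gr.generate_is_subgroup T_subset_carrier by blast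

lemma K1_subset_K: "K1 \<subseteq> K"
  using Gr.generate_subgroup_incl[OF _ K_subgroup] by blast

lemma K1_subset_carrier: "K1 \<subseteq> carrier G"
  using K1_subset_K K_subset_carrier by blast

lemma rmult_in_K1: "a \<in> block \<Longrightarrow> R a \<in> K1"
  using rmult_mem_K_iff block_subset_L unfolding rmults_def by (blast intro: generate.incl)

lemma rmult_outside_commutes_K1:
  assumes "x \<in> L" "x \<notin> block" "k \<in> K1" "y \<in> L"
  shows "R x (k y) = k (R x y)"
proof -
  have "R x \<in> T - K" using assms(1,2) rmult_mem_K_iff unfolding rmults_def by blast
  hence "R x \<otimes>\<^bsub>G\<^esub> k = k \<otimes>\<^bsub>G\<^esub> R x" using bspec[OF bspec[OF commutes] assms(3)] by blast
  thus ?thesis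
    using assms(1,3,4) K1_subset_carrier mult_apply[of "R x" k y] mult_apply[of k "R x" y]
    by (simp add: rmult_in_carrier subsetD)
qed

lemma K1_semiregular:
  assumes k: "k \<in> K1" and ke: "k e = e"
  shows "k = \<one>\<^bsub>G\<^esub>"
proof (rule perm_eqI)
  show "k \<in> carrier G" using k K1_subset_carrier by blast
  fix x assume x: "x \<in> L"
  have "k x = x"
  proof (cases "x \<in> block")
    case False
    hence "R x (k e) = k (R x e)" using rmult_outside_commutes_K1 x k e_in_L by blast
    thus ?thesis using ke x by (simp add: rmult_e)
  next
    case True
    obtain b where b: "b \<in> L" "b \<notin> block" using exists_not_in_block by blast
    then obtain y where y: "y \<in> L" "m b y = x" using loop_left_division[OF loop b(1) x] by blast
    have "y \<notin> block"
    proof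
      assume "y \<in> block"
      hence "R y b \<in> block \<longleftrightarrow> b \<in> block"
        using K_apply_mem_block_iff rmult_mem_K_iff y(1) b(1) by blast
      thus False using True b y by (simp add: rmult_apply)
    qed
    have x_eq: "x = R y (R b e)" using y b by (simp add: rmult_e rmult_apply)
    have "k x = R y (R b (k e))"
      unfolding x_eq using rmult_outside_commutes_K1 b y \<open>y \<notin> block\<close> k e_in_L
      by (simp add: perm_closed rmult_in_carrier subsetD K1_subset_carrier)
    thus ?thesis using ke x_eq by simp
  qed
  thus "k x = \<one>\<^bsub>G\<^esub> x" using x by (simp add: one_apply)
qed simp

lemma K1_eq_if_agree_at_e:
  assumes "k \<in> K1" "k' \<in> K1" "k e = k' e"
  shows "k = k'"
proof -
  have kG: "k \<in> carrier G" "k' \<in> carrier G" using assms(1,2) K1_subset_carrier by auto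
  have "inv\<^bsub>G\<^esub> k' \<otimes>\<^bsub>G\<^esub> k \<in> K1"
    using assms(1,2) K1_subgroup by (simp add: subgroup.m_closed subgroup.m_inv_closed)
  moreover have "(inv\<^bsub>G\<^esub> k' \<otimes>\<^bsub>G\<^esub> k) e = e"
    using kG assms(3) e_in_L by (simp add: mult_apply inv_apply)
  ultimately have "\<one>\<^bsub>G\<^esub> = inv\<^bsub>G\<^esub> k' \<otimes>\<^bsub>G\<^esub> k" using K1_semiregular by simp
  thus ?thesis using kG by (simp add: Gr.inv_solve_left)
qed

lemma stab_inter_K1: "H \<inter> K1 = {\<one>\<^bsub>G\<^esub>}"
  using K1_semiregular stab_subgroup K1_subgroup
  by (auto simp: mem_stab_iff subgroup.one_closed one_apply e_in_L)

lemma card_K1: "card K1 = card block"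
proof (rule bij_betw_same_card[of "\<lambda>k. k e"], rule bij_betw_imageI)
  show "inj_on (\<lambda>k. k e) K1" using K1_eq_if_agree_at_e by (blast intro: inj_onI)
  show "(\<lambda>k. k e) ` K1 = block"
  proof
    show "(\<lambda>k. k e) ` K1 \<subseteq> block" using K1_subset_K unfolding block_def by blast
    show "block \<subseteq> (\<lambda>k. k e) ` K1"
    proof
      fix a assume "a \<in> block"
      hence "R a \<in> K1" "R a e = a" using rmult_in_K1 block_subset_L rmult_e by auto
      thus "a \<in> (\<lambda>k. k e) ` K1" using image_eqI[of a "\<lambda>k. k e" "R a" K1] by simp
    qed
  qed
qed

end

section \<open>Envelopes of loops of order 2p\<close>

locale envelope_2p = envelope_block +
  fixes p :: nat
  assumes prime_p: "Factorial_Ring.prime p"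
    and card_L: "card L = 2 * p"
    and card_stab_rcosets: "card {H #>\<^bsub>G\<^esub> k | k. k \<in> K} = p"
    and stab_nontrivial: "H \<noteq> {\<one>\<^bsub>G\<^esub>}"
begin

lemma p_gt_1: "1 < p"
  using prime_gt_1_nat[OF prime_p] .

lemma finite_L: "finite L"
  using card_L p_gt_1 by (intro card_ge_0_finite) simp

lemma stab_rcos_eq_iff:
  assumes "k \<in> K" "k' \<in> K"
  shows "H #>\<^bsub>G\<^esub> k = H #>\<^bsub>G\<^esub> k' \<longleftrightarrow> (inv\<^bsub>G\<^esub> k) e = (inv\<^bsub>G\<^esub> k') e"
proof -
  have kG: "k \<in> carrier G" "k' \<in> carrier G" using assms K_subset_carrier by auto
  have "H #>\<^bsub>G\<^esub> k = H #>\<^bsub>G\<^esub> k' \<longleftrightarrow> k' \<in> H #>\<^bsub>G\<^esub> k"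
  proof
    assume "H #>\<^bsub>G\<^esub> k = H #>\<^bsub>G\<^esub> k'"
    thus "k' \<in> H #>\<^bsub>G\<^esub> k" by (rule Gr.repr_independenceD[OF stab_subgroup kG(2)])
  qed (rule Gr.repr_independence[OF _ kG(1) stab_subgroup])
  also have "\<dots> \<longleftrightarrow> k' \<otimes>\<^bsub>G\<^esub> inv\<^bsub>G\<^esub> k \<in> H"
    by (rule subgroup.rcos_module[OF stab_subgroup group_G kG])
  also have "\<dots> \<longleftrightarrow> k' ((inv\<^bsub>G\<^esub> k) e) = e"
    using kG e_in_L by (simp add: mem_stab_iff mult_apply)
  also have "\<dots> \<longleftrightarrow> (inv\<^bsub>G\<^esub> k) e = (inv\<^bsub>G\<^esub> k') e"
  proof
    assume "k' ((inv\<^bsub>G\<^esub> k) e) = e"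
    hence "(inv\<^bsub>G\<^esub> k') (k' ((inv\<^bsub>G\<^esub> k) e)) = (inv\<^bsub>G\<^esub> k') e" by simp
    thus "(inv\<^bsub>G\<^esub> k) e = (inv\<^bsub>G\<^esub> k') e" using kG e_in_L by (simp add: inv_apply perm_closed)
  qed (use kG e_in_L in \<open>simp add: apply_inv\<close>)
  finally show ?thesis .
qed

lemma card_block: "card block = p"
proof -
  have "(\<lambda>k. inv\<^bsub>G\<^esub> k) ` K = K"
  proof
    show "(\<lambda>k. inv\<^bsub>G\<^esub> k) ` K \<subseteq> K" using subgroup.m_inv_closed[OF K_subgroup] by blast
    show "K \<subseteq> (\<lambda>k. inv\<^bsub>G\<^esub> k) ` K"
    proof
      fix k assume "k \<in> K"
      hence "k = inv\<^bsub>G\<^esub> (inv\<^bsub>G\<^esub> k)" "inv\<^bsub>G\<^esub> k \<in> K"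
        using K_subset_carrier subgroup.m_inv_closed[OF K_subgroup] by auto
      thus "k \<in> (\<lambda>k. inv\<^bsub>G\<^esub> k) ` K" by (rule image_eqI)
    qed
  qed
  hence "block = (\<lambda>k. k e) ` (\<lambda>k. inv\<^bsub>G\<^esub> k) ` K"
    unfolding block_def by simp
  hence "(\<lambda>k. (inv\<^bsub>G\<^esub> k) e) ` K = block" by (simp add: image_image)
  moreover have "{H #>\<^bsub>G\<^esub> k | k. k \<in> K} = (\<lambda>k. H #>\<^bsub>G\<^esub> k) ` K" by blast
  ultimately show ?thesis
    using card_stab_rcosets card_image_eq_if_same_fibres[where A = K and f = "\<lambda>k. H #>\<^bsub>G\<^esub> k"
        and g = "\<lambda>k. (inv\<^bsub>G\<^esub> k) e", OF stab_rcos_eq_iff] by simp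
qed

lemma card_outside_block: "card (L - block) = p"
  using card_Diff_subset[OF finite_subset[OF block_subset_L finite_L] block_subset_L]
    card_block card_L by simp

lemma outside_K_apply_outside_block:
  assumes g: "g \<in> carrier G" "g \<notin> K" and x: "x \<in> L" "x \<notin> block"
  shows "g x \<in> block"
proof (rule ccontr)
  assume gx: "g x \<notin> block"
  have inj: "inj_on g block" using inj_on_subset[OF perm_inj[OF g(1)] block_subset_L] .
  have "g ` block \<subseteq> L - block"
  proof (rule image_subsetI)
    fix y assume "y \<in> block"
    thus "g y \<in> L - block"
      using apply_block_mem_block_iff[OF g(1)] g(2) perm_closed[OF g(1)] block_subset_L by auto
  qed
  moreover have "card (g ` block) = card (L - block)"
    using card_image[OF inj] card_block card_outside_block by simp
  ultimately have "g ` block = L - block" using finite_L by (intro card_subset_eq) auto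
  hence "g x \<in> g ` block" using gx x(1) perm_closed[OF g(1)] by simp
  then obtain y where y: "y \<in> block" "g x = g y" by (elim imageE)
  hence "x = y" using inj_onD[OF perm_inj[OF g(1)]] x(1) block_subset_L by (simp add: subsetD)
  thus False using x(2) y(1) by simp
qed

lemma apply_mem_block_iff:
  assumes "g \<in> carrier G" "x \<in> L"
  shows "g x \<in> block \<longleftrightarrow> (x \<in> block \<longleftrightarrow> g \<in> K)"
proof (cases "x \<in> block")
  case True
  thus ?thesis using apply_block_mem_block_iff[OF assms(1)] by simp
next
  case False
  thus ?thesis
    using K_apply_mem_block_iff[OF _ assms(2)] outside_K_apply_outside_block[OF assms(1) _ assms(2)]
    by auto
qed

lemma card_K1_eq_p: "card K1 = p"
  using card_K1 card_block by simp

lemma exists_nontrivial_K1: "\<exists>t \<in> K1. t \<noteq> \<one>\<^bsub>G\<^esub>"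
proof (rule ccontr)
  assume "\<not> ?thesis"
  hence "K1 \<subseteq> {\<one>\<^bsub>G\<^esub>}" by blast
  hence "card K1 \<le> 1" using card_mono[of "{\<one>\<^bsub>G\<^esub>}" K1] by simp
  thus False using card_K1_eq_p p_gt_1 by simp
qed

definition t :: "'a \<Rightarrow> 'a" where
  "t = (SOME t. t \<in> K1 \<and> t \<noteq> \<one>\<^bsub>G\<^esub>)"

lemma t_in_K1: "t \<in> K1" and t_ne_one: "t \<noteq> \<one>\<^bsub>G\<^esub>"
  using someI_ex[of "\<lambda>t. t \<in> K1 \<and> t \<noteq> \<one>\<^bsub>G\<^esub>"] exists_nontrivial_K1 unfolding t_def by auto

lemma t_in_carrier: "t \<in> carrier G"
  using t_in_K1 K1_subset_carrier by blast

lemma generate_t: "generate G {t} = K1"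
  using Gr.generate_eq_subgroup_of_prime_card[OF K1_subgroup _ t_in_K1 t_ne_one]
    card_K1_eq_p prime_p by simp

lemma ord_t: "Gr.ord t = p"
  using Gr.generate_pow_card[OF t_in_carrier] generate_t card_K1_eq_p by simp

lemma K1_eq_powers: "K1 = {t [^]\<^bsub>G\<^esub> i | i. i \<in> (UNIV :: nat set)}"
  using Gr.generate_pow_nat[OF t_in_carrier] ord_t p_gt_1 generate_t by simp

lemma pow_t_in_K1: "t [^]\<^bsub>G\<^esub> (i :: nat) \<in> K1"
  using K1_eq_powers by blast

lemma K1_comm: "k \<in> K1 \<Longrightarrow> k' \<in> K1 \<Longrightarrow> k \<otimes>\<^bsub>G\<^esub> k' = k' \<otimes>\<^bsub>G\<^esub> k"
  using K1_eq_powers by (auto simp: Gr.nat_pow_mult[OF t_in_carrier] add.commute)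

lemma K1_subset_center: "K1 \<subseteq> group_center G"
proof
  fix k assume k: "k \<in> K1"
  show "k \<in> group_center G"
  proof (rule Gr.center_if_commutes_with_generators[OF carrier_G_generate T_subset_carrier])
    show "k \<in> carrier G" using k K1_subset_carrier by blast
    fix s assume "s \<in> T"
    show "s \<otimes>\<^bsub>G\<^esub> k = k \<otimes>\<^bsub>G\<^esub> s"
    proof (cases "s \<in> K")
      case True
      hence "s \<in> K1" using \<open>s \<in> T\<close> by (blast intro: generate.incl)
      thus ?thesis using k by (rule K1_comm)
    next
      case False
      hence "s \<in> T - K" using \<open>s \<in> T\<close> by blast
      from bspec[OF bspec[OF commutes this] k] show ?thesis .
    qed
  qed
qed

lemma pow_t_commutes:
  assumes "g \<in> carrier G" "x \<in> L"
  shows "g ((t [^]\<^bsub>G\<^esub> (i :: nat)) x) = (t [^]\<^bsub>G\<^esub> i) (g x)"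
proof -
  have "t [^]\<^bsub>G\<^esub> i \<otimes>\<^bsub>G\<^esub> g = g \<otimes>\<^bsub>G\<^esub> t [^]\<^bsub>G\<^esub> i"
    by (rule group_center_commutes[OF subsetD[OF K1_subset_center pow_t_in_K1] assms(1)])
  thus ?thesis using assms t_in_carrier mult_apply[of g "t [^]\<^bsub>G\<^esub> i" x]
      mult_apply[of "t [^]\<^bsub>G\<^esub> i" g x] by simp
qed

lemma pow_t_mod: "t [^]\<^bsub>G\<^esub> (i mod p) = t [^]\<^bsub>G\<^esub> i"
proof -
  have "t [^]\<^bsub>G\<^esub> (p * (i div p)) = \<one>\<^bsub>G\<^esub>"
    using Gr.pow_eq_id[OF t_in_carrier] ord_t by simp
  hence "t [^]\<^bsub>G\<^esub> i = t [^]\<^bsub>G\<^esub> (i mod p)"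
    using Gr.nat_pow_mult[OF t_in_carrier, of "p * (i div p)" "i mod p"] t_in_carrier by simp
  thus ?thesis ..
qed

definition b :: 'a where
  "b = (SOME b. b \<in> L \<and> b \<notin> block)"

lemma b_in_L: "b \<in> L" and b_not_in_block: "b \<notin> block"
  using someI_ex[of "\<lambda>b. b \<in> L \<and> b \<notin> block"] exists_not_in_block unfolding b_def by auto

definition point :: "nat \<times> bool \<Rightarrow> 'a" where
  "point c = (t [^]\<^bsub>G\<^esub> fst c) (if snd c then b else e)"

abbreviation coords :: "(nat \<times> bool) set" where
  "coords \<equiv> {..<p} \<times> UNIV"

lemma point_0: "point (0, False) = e" "point (0, True) = b"
  by (simp_all add: point_def one_apply e_in_L b_in_L)

lemma point_in_L: "point c \<in> L"
  unfolding point_def using t_in_carrier e_in_L b_in_L by (simp add: perm_closed)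

lemma point_mem_block_iff: "point c \<in> block \<longleftrightarrow> \<not> snd c"
  unfolding point_def
  using K_apply_mem_block_iff[OF subsetD[OF K1_subset_K pow_t_in_K1]] e_in_L b_in_L e_in_block
    b_not_in_block
  by simp

lemma point_mod: "point (i mod p, s) = point (i, s)"
  by (simp add: point_def pow_t_mod)

lemma pow_t_apply_point: "(t [^]\<^bsub>G\<^esub> j) (point (i, s)) = point (j + i, s)"
  using mult_apply[of "t [^]\<^bsub>G\<^esub> j" "t [^]\<^bsub>G\<^esub> i" "if s then b else e"]
    t_in_carrier e_in_L b_in_L
  by (simp add: point_def Gr.nat_pow_mult)

lemma apply_point: "g \<in> carrier G \<Longrightarrow> g (point (i, s)) = (t [^]\<^bsub>G\<^esub> i) (g (point (0, s)))"
  using pow_t_commutes[of g "point (0, s)" i] pow_t_apply_point[of i 0 s] point_in_L by simp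

lemma inj_on_point: "inj_on point coords"
proof (rule inj_onI)
  fix c c' assume c: "c \<in> coords" "c' \<in> coords" and eq: "point c = point c'"
  obtain i s i' s' where cc: "c = (i, s)" "c' = (i', s')" by (cases c, cases c')
  have "s = s'" using point_mem_block_iff[of c] point_mem_block_iff[of c'] eq cc by simp
  let ?x = "point (0, s)"
  let ?z = "inv\<^bsub>G\<^esub> (t [^]\<^bsub>G\<^esub> i') \<otimes>\<^bsub>G\<^esub> t [^]\<^bsub>G\<^esub> i"
  have "?z \<in> K1"
    using pow_t_in_K1 K1_subgroup by (simp add: subgroup.m_closed subgroup.m_inv_closed)
  moreover have "?z ?x = ?x"
  proof -
    have "(t [^]\<^bsub>G\<^esub> i) ?x = (t [^]\<^bsub>G\<^esub> i') ?x"
      using eq cc \<open>s = s'\<close> pow_t_apply_point[of _ 0 s] by simp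
    thus ?thesis using t_in_carrier point_in_L by (simp add: mult_apply inv_apply)
  qed
  ultimately have "?z = \<one>\<^bsub>G\<^esub>"
    using central_fixing_point_eq_one[OF subsetD[OF K1_subset_center] point_in_L] by blast
  hence "t [^]\<^bsub>G\<^esub> i = t [^]\<^bsub>G\<^esub> i'"
    using Gr.inv_solve_left[of "\<one>\<^bsub>G\<^esub>" "t [^]\<^bsub>G\<^esub> i'" "t [^]\<^bsub>G\<^esub> i"] t_in_carrier by simp
  hence "i = i'"
    by (rule inj_onD[OF Gr.ord_inj[OF t_in_carrier]]) (use c cc ord_t in auto)
  thus "c = c'" using cc \<open>s = s'\<close> by simp
qed

lemma bij_point: "bij_betw point coords L"
proof -
  have "point ` coords \<subseteq> L" using point_in_L by blast
  moreover have "card (point ` coords) = card L"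
    using card_image[OF inj_on_point] card_L by (simp add: card_cartesian_product)
  ultimately have "point ` coords = L" using finite_L by (intro card_subset_eq)
  thus ?thesis using inj_on_point by (simp add: bij_betw_def)
qed

definition coord :: "'a \<Rightarrow> nat \<times> bool" where
  "coord = the_inv_into coords point"

lemma coord_in_coords: "x \<in> L \<Longrightarrow> coord x \<in> coords"
  using bij_betw_the_inv_into[OF bij_point] unfolding coord_def bij_betw_def by blast

lemma point_coord: "x \<in> L \<Longrightarrow> point (coord x) = x"
  using f_the_inv_into_f_bij_betw[OF bij_point] unfolding coord_def by blast

lemma coord_point: "coord (point (i, s)) = (i mod p, s)"
  using the_inv_into_f_f[OF inj_on_point, of "(i mod p, s)"] p_gt_1 point_mod
  unfolding coord_def by simp

lemma coord_e: "coord e = (0, False)" and coord_b: "coord b = (0, True)"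
  using coord_point[of 0 False] coord_point[of 0 True] by (simp_all add: point_0)

text \<open>Whether g swaps the two blocks, and the rotations with which it lands on the block of e
  and on the block of b.\<close>
definition to_wreath :: "('a \<Rightarrow> 'a) \<Rightarrow> (nat \<times> nat) \<times> bool" where
  "to_wreath g = (let s = (g \<notin> K) in ((fst (coord (g (point (0, s)))), fst (coord (g (point (0, \<not> s))))), s))"

lemma to_wreath_in_carrier: "g \<in> carrier G \<Longrightarrow> to_wreath g \<in> carrier (wreath_Cp_C2 p)"
  using coord_in_coords[OF perm_closed[OF _ point_in_L]]
  by (auto simp: to_wreath_def Let_def carrier_wreath mem_Times_iff)

lemma to_wreath_K: "k \<in> K \<Longrightarrow> to_wreath k = ((fst (coord (k e)), fst (coord (k b))), False)"
  by (simp add: to_wreath_def point_0)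

lemma to_wreath_outside_K: "g \<notin> K \<Longrightarrow> to_wreath g = ((fst (coord (g b)), fst (coord (g e))), True)"
  by (simp add: to_wreath_def point_0)

lemma apply_point_eq_wreath_act:
  assumes g: "g \<in> carrier G"
  shows "g (point c) = point (wreath_act p (to_wreath g) c)"
proof -
  obtain i s where c: "c = (i, s)" by (cases c)
  obtain j s' where js: "coord (g (point (0, s))) = (j, s')" by (cases "coord (g (point (0, s)))")
  have gx: "g (point (0, s)) = point (j, s')"
    using point_coord[OF perm_closed[OF g point_in_L[of "(0, s)"]]] js by simp
  have "s' \<longleftrightarrow> (s \<longleftrightarrow> g \<in> K)"
    using apply_mem_block_iff[OF g point_in_L, of "(0, s)"] unfolding gx
    by (auto simp: point_mem_block_iff)
  hence "wreath_act p (to_wreath g) (i, s) = ((i + j) mod p, s')"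
    using js by (cases s; cases "g \<in> K") (simp_all add: to_wreath_def wreath_act_def Let_def)
  moreover have "g (point (i, s)) = point (i + j, s')"
    using apply_point[OF g, of i s] gx pow_t_apply_point by simp
  ultimately show ?thesis unfolding c by (simp add: point_mod)
qed

lemma to_wreath_mult:
  assumes g: "g \<in> carrier G" and h: "h \<in> carrier G"
  shows "to_wreath (g \<otimes>\<^bsub>G\<^esub> h) = wreath_mult p (to_wreath g) (to_wreath h)"
proof -
  have act: "wreath_act p (to_wreath (g \<otimes>\<^bsub>G\<^esub> h)) c = wreath_act p (wreath_mult p (to_wreath g) (to_wreath h)) c"
    for c
  proof (rule inj_onD[OF inj_on_point])
    show "point (wreath_act p (to_wreath (g \<otimes>\<^bsub>G\<^esub> h)) c)
        = point (wreath_act p (wreath_mult p (to_wreath g) (to_wreath h)) c)"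
      using g h by (simp add: apply_point_eq_wreath_act[symmetric] mult_apply point_in_L wreath_act_mult)
  qed (use wreath_act_closed p_gt_1 in auto)
  show ?thesis
    by (rule wreath_eq_if_act_eq[OF to_wreath_in_carrier[OF Gr.m_closed[OF g h]] wreath_mult_closed])
      (use p_gt_1 act in simp_all)
qed

lemma inj_on_to_wreath: "inj_on to_wreath (carrier G)"
proof (rule inj_onI)
  fix g h assume g: "g \<in> carrier G" and h: "h \<in> carrier G" and "to_wreath g = to_wreath h"
  show "g = h"
  proof (rule perm_eqI[OF g h])
    fix x assume "x \<in> L"
    have "g (point (coord x)) = h (point (coord x))"
      using apply_point_eq_wreath_act[OF g] apply_point_eq_wreath_act[OF h] \<open>to_wreath g = to_wreath h\<close> by simp
    thus "g x = h x" using point_coord[OF \<open>x \<in> L\<close>] by simp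
  qed
qed

definition h0 :: "'a \<Rightarrow> 'a" where
  "h0 = (SOME h. h \<in> H \<and> h \<noteq> \<one>\<^bsub>G\<^esub>)"

lemma h0_in_stab: "h0 \<in> H" and h0_ne_one: "h0 \<noteq> \<one>\<^bsub>G\<^esub>"
proof -
  have "\<exists>h. h \<in> H \<and> h \<noteq> \<one>\<^bsub>G\<^esub>"
    using stab_nontrivial subgroup.one_closed[OF stab_subgroup] by blast
  thus "h0 \<in> H" "h0 \<noteq> \<one>\<^bsub>G\<^esub>" unfolding h0_def by (metis (mono_tags, lifting) someI_ex)+
qed

lemma h0_in_carrier: "h0 \<in> carrier G" and h0_e: "h0 e = e" and h0_in_K: "h0 \<in> K"
  using h0_in_stab stab_subset_K by (auto simp: mem_stab_iff)

definition h0_shift :: nat where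
  "h0_shift = fst (coord (h0 b))"

lemma to_wreath_h0: "to_wreath h0 = ((0, h0_shift), False)"
  using to_wreath_K[OF h0_in_K] h0_e coord_e by (simp add: h0_shift_def)

lemma h0_shift_pos: "0 < h0_shift"
proof (rule ccontr)
  assume "\<not> 0 < h0_shift"
  moreover have "to_wreath \<one>\<^bsub>G\<^esub> = ((0, 0), False)"
    using to_wreath_K[OF subgroup.one_closed[OF K_subgroup]] e_in_L b_in_L coord_e coord_b
    by (simp add: one_apply)
  ultimately have "to_wreath h0 = to_wreath \<one>\<^bsub>G\<^esub>" using to_wreath_h0 by simp
  hence "h0 = \<one>\<^bsub>G\<^esub>" using inj_onD[OF inj_on_to_wreath] h0_in_carrier by simp
  thus False using h0_ne_one by contradiction
qed

lemma h0_shift_lt_p: "h0_shift < p"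
  using coord_in_coords[OF perm_closed[OF h0_in_carrier b_in_L]] by (auto simp: h0_shift_def)

lemma h0_apply_point_True: "h0 (point (i, True)) = point (i + h0_shift, True)"
  using apply_point_eq_wreath_act[OF h0_in_carrier, of "(i, True)"] to_wreath_h0
  by (simp add: wreath_act_def point_mod)

lemma h0_pow: "h0 [^]\<^bsub>G\<^esub> j \<in> H \<and> (h0 [^]\<^bsub>G\<^esub> j) b = point (j * h0_shift, True)"
proof (induction j)
  case 0
  show ?case using subgroup.one_closed[OF stab_subgroup] b_in_L by (simp add: one_apply point_0)
next
  case (Suc j)
  have "h0 [^]\<^bsub>G\<^esub> Suc j = h0 \<otimes>\<^bsub>G\<^esub> h0 [^]\<^bsub>G\<^esub> j"
    by (rule Gr.nat_pow_Suc2[OF h0_in_carrier])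
  moreover have "h0 \<otimes>\<^bsub>G\<^esub> h0 [^]\<^bsub>G\<^esub> j \<in> H"
    using Suc.IH h0_in_stab subgroup.m_closed[OF stab_subgroup] by blast
  moreover have "(h0 \<otimes>\<^bsub>G\<^esub> h0 [^]\<^bsub>G\<^esub> j) b = point (Suc j * h0_shift, True)"
    using Suc.IH h0_in_carrier b_in_L by (simp add: mult_apply h0_apply_point_True add.commute)
  ultimately show ?case by (simp only:)
qed

lemma to_wreath_surj_K:
  assumes "c0 < p" "c1 < p"
  shows "\<exists>k \<in> carrier G. to_wreath k = ((c0, c1), False)"
proof -
  have "\<not> p dvd h0_shift" using h0_shift_pos h0_shift_lt_p by (auto dest: dvd_imp_le)
  then obtain j where j: "j * h0_shift mod p = (c1 + (p - c0)) mod p"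
    using exists_mult_mod_eq[OF prime_p] by blast
  let ?k = "t [^]\<^bsub>G\<^esub> c0 \<otimes>\<^bsub>G\<^esub> h0 [^]\<^bsub>G\<^esub> j"
  have h: "h0 [^]\<^bsub>G\<^esub> j \<in> H" "(h0 [^]\<^bsub>G\<^esub> j) b = point (j * h0_shift, True)"
    using h0_pow by auto
  hence hG: "h0 [^]\<^bsub>G\<^esub> j \<in> carrier G" "(h0 [^]\<^bsub>G\<^esub> j) e = e"
    by (auto simp: mem_stab_iff)
  have kK: "?k \<in> K"
    using h(1) pow_t_in_K1 K1_subset_K stab_subset_K subgroup.m_closed[OF K_subgroup] by blast
  have "?k e = point (c0, False)"
    using hG t_in_carrier e_in_L pow_t_apply_point[of c0 0 False] by (simp add: mult_apply point_0)
  moreover have "?k b = point (c0 + j * h0_shift, True)"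
    using h hG(1) t_in_carrier b_in_L by (simp add: mult_apply pow_t_apply_point)
  moreover have "(c0 + j * h0_shift) mod p = c1"
  proof -
    have "(c0 + j * h0_shift) mod p = (c0 + (c1 + (p - c0))) mod p"
      using j by (metis mod_add_right_eq)
    also have "c0 + (c1 + (p - c0)) = c1 + p" using assms(1) by simp
    finally show ?thesis using assms(2) by simp
  qed
  ultimately have "to_wreath ?k = ((c0, c1), False)"
    using to_wreath_K[OF kK] assms(1) by (simp add: coord_point)
  thus ?thesis using kK K_subset_carrier by blast
qed

lemma to_wreath_surj:
  assumes "w \<in> carrier (wreath_Cp_C2 p)"
  shows "\<exists>g \<in> carrier G. to_wreath g = w"
proof -
  obtain c0 c1 s where w: "w = ((c0, c1), s)" and c: "c0 < p" "c1 < p"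
    using assms by (auto simp: carrier_wreath)
  show ?thesis
  proof (cases s)
    case False
    thus ?thesis using to_wreath_surj_K[OF c] w by simp
  next
    case True
    define c where "c = fst (coord (R b b))"
    have Rb: "R b \<in> carrier G" "R b \<notin> K"
      using rmult_in_carrier rmult_mem_K_iff b_in_L b_not_in_block by auto
    have "c < p"
      using coord_in_coords[OF perm_closed[OF Rb(1) b_in_L]] by (auto simp: c_def)
    have to_wreath_Rb: "to_wreath (R b) = ((c, 0), True)"
      using to_wreath_outside_K[OF Rb(2)] rmult_e[OF b_in_L] coord_b by (simp add: c_def)
    obtain k where k: "k \<in> carrier G" "to_wreath k = (((c0 + (p - c)) mod p, c1), False)"
      using to_wreath_surj_K[of "(c0 + (p - c)) mod p" c1] c(2) p_gt_1 by auto
    have "((c0 + (p - c)) mod p + c) mod p = c0"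
    proof -
      have "((c0 + (p - c)) mod p + c) mod p = (c0 + (p - c) + c) mod p"
        by (simp add: mod_add_left_eq)
      also have "c0 + (p - c) + c = c0 + p" using \<open>c < p\<close> by simp
      finally show ?thesis using c(1) by simp
    qed
    hence "to_wreath (k \<otimes>\<^bsub>G\<^esub> R b) = ((c0, c1), True)"
      using to_wreath_mult[OF k(1) Rb(1)] k(2) to_wreath_Rb c(2) by (simp add: wreath_mult_def)
    thus ?thesis using k(1) Rb(1) w True by auto
  qed
qed

lemma iso_wreath: "G \<cong> wreath_Cp_C2 p"
proof (rule is_isoI)
  have "to_wreath ` carrier G = carrier (wreath_Cp_C2 p)"
  proof
    show "to_wreath ` carrier G \<subseteq> carrier (wreath_Cp_C2 p)" using to_wreath_in_carrier by blast
    show "carrier (wreath_Cp_C2 p) \<subseteq> to_wreath ` carrier G"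
    proof
      fix w assume "w \<in> carrier (wreath_Cp_C2 p)"
      then obtain g where "g \<in> carrier G" "to_wreath g = w" using to_wreath_surj by blast
      thus "w \<in> to_wreath ` carrier G" by (auto intro: imageI)
    qed
  qed
  thus "to_wreath \<in> iso G (wreath_Cp_C2 p)"
    using to_wreath_in_carrier to_wreath_mult inj_on_to_wreath
    by (simp add: iso_def hom_def bij_betw_def mult_wreath)
qed

end

theorem proposition5p5:
  fixes L :: "'a set" and m :: "'a \<Rightarrow> 'a \<Rightarrow> 'a" and e :: 'a and p :: nat
    and K :: "('a \<Rightarrow> 'a) set"
  defines "G \<equiv> rmlt_group L m"
    and "H \<equiv> env_stab L m e"
    and "T \<equiv> rmults L m"
  defines "K1 \<equiv> generate G (T \<inter> K)"
  defines "H1 \<equiv> H \<inter> K1"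
  assumes "Factorial_Ring.prime p" and "odd p"
    and "finite L" and "card L = 2 * p"
    and "rcc_loop L m e"
    and "subgroup K G"
    and "H \<subset> K" and "K \<subset> carrier G"
    and "card (rcosets\<^bsub>G\<^esub> K) = 2"
    and "card {H #>\<^bsub>G\<^esub> k | k. k \<in> K} = p"
    and "H \<noteq> {\<one>\<^bsub>G\<^esub>}"
    and "\<forall>s \<in> T - K. \<forall>k \<in> K1. s \<otimes>\<^bsub>G\<^esub> k = k \<otimes>\<^bsub>G\<^esub> s"
  shows "H1 = {\<one>\<^bsub>G\<^esub>} \<and> K1 \<subseteq> group_center G \<and> G \<cong> wreath_Cp_C2 p"
proof -
  interpret envelope_2p L m e K p
  proof (intro envelope_2p.intro envelope_block.intro loop_envelope.intro
      envelope_block_axioms.intro envelope_2p_axioms.intro, fold G_def H_def T_def, fold K1_def)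
    show "loop L m e" using \<open>rcc_loop L m e\<close> by (simp add: rcc_loop_def)
    show "H \<subseteq> K" "K \<noteq> carrier G" using \<open>H \<subset> K\<close> \<open>K \<subset> carrier G\<close> by auto
  qed fact+
  show ?thesis
    unfolding H1_def K1_def H_def G_def T_def
    using stab_inter_K1 K1_subset_center iso_wreath by auto
qed

end
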